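(* Let $A$ be an abelian group. The set $IE(A)$ of all inertial endomorphisms of $A$ is a subring of the endomorphism ring $E(A)$, and it contains the set $F(A)$ of all endomorphisms of $A$ with finite image, which is an ideal of $IE(A)$.
   Context: Abelian groups are written additively. An endomorphism $\varphi$ of an abelian group $A$ is called inertial if for every subgroup $X\le A$ the quotient $(\varphi(X)+X)/X$ is finite. *)

theory Defs
  imports "HOL-Algebra.Ideal" "HOL-Algebra.Subrings"
begin

text \<open>The abelian group A is the type 'a of class ab_group_add (carrier UNIV).\<close>

definition endo :: "('a::ab_group_add \<Rightarrow> 'a) \<Rightarrow> bool" where
  "endo \<phi> \<longleftrightarrow> (\<forall>x y. \<phi> (x + y) = \<phi> x + \<phi> y)"

definition subgrp :: "'a::ab_group_add set \<Rightarrow> bool" where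
  "subgrp U \<longleftrightarrow> 0 \<in> U \<and> (\<forall>x\<in>U. \<forall>y\<in>U. x + y \<in> U) \<and> (\<forall>x\<in>U. uminus x \<in> U)"

text \<open>The quotient (Y + U)/U as the set of cosets y + U, y in Y + U.\<close>
definition quot_set :: "'a::ab_group_add set \<Rightarrow> 'a set \<Rightarrow> 'a set set" where
  "quot_set Y U = (\<lambda>y. (\<lambda>x. y + x) ` U) ` Y"

definition inertial :: "('a::ab_group_add \<Rightarrow> 'a) \<Rightarrow> bool" where
  "inertial \<phi> \<longleftrightarrow> endo \<phi> \<and>
     (\<forall>U. subgrp U \<longrightarrow> finite (quot_set {a + b | a b. a \<in> \<phi> ` U \<and> b \<in> U} U))"

definition End_ring :: "'a::ab_group_add itself \<Rightarrow> ('a \<Rightarrow> 'a) ring" where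
  "End_ring _ = \<lparr>carrier = {\<phi>. endo \<phi>}, mult = (\<lambda>\<phi> \<psi>. \<phi> \<circ> \<psi>), one = id,
                 zero = (\<lambda>x. 0), add = (\<lambda>\<phi> \<psi> x. \<phi> x + \<psi> x)\<rparr>"

definition IE :: "'a::ab_group_add itself \<Rightarrow> ('a \<Rightarrow> 'a) set" where
  "IE _ = {\<phi>. inertial \<phi>}"

definition FE :: "'a::ab_group_add itself \<Rightarrow> ('a \<Rightarrow> 'a) set" where
  "FE _ = {\<phi>. endo \<phi> \<and> finite (range \<phi>)}"

end

theory Submission
  imports Defs
begin

text \<open>An endomorphism \<phi> is inertial iff it maps every subgroup U into finitely many cosets of U,
  i.e. \<phi>(U) \<subseteq> F + U for some finite set F. This covering condition is preserved by sums and
  negatives, and by composition: from \<psi>(U) \<subseteq> G + U and \<phi>(U) \<subseteq> F + U we get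
  \<phi>(\<psi>(U)) \<subseteq> \<phi>(G) + F + U. It holds trivially when \<phi> has finite image. Finally, the
  endomorphisms with finite image form an ideal of the whole ring E(A), hence of any subring
  containing them, such as IE(A).\<close>

lemma endo_zero: "endo \<phi> \<Longrightarrow> \<phi> 0 = 0"
  unfolding endo_def by (metis add_0 add_cancel_left_right)

lemma endo_minus: "endo \<phi> \<Longrightarrow> \<phi> (- x) = - \<phi> x"
proof -
  assume "endo \<phi>"
  then have "\<phi> x + \<phi> (- x) = 0"
    using endo_zero unfolding endo_def by (metis add.right_inverse)
  then show ?thesis by (simp add: add_eq_0_iff)
qed

lemma endo_diff: "endo \<phi> \<Longrightarrow> \<phi> (x - y) = \<phi> x - \<phi> y"
  by (metis endo_def endo_minus diff_conv_add_uminus)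

lemma endo_id: "endo id"
  unfolding endo_def by simp

lemma endo_zero_fun: "endo (\<lambda>x. 0)"
  unfolding endo_def by simp

lemma endo_add: "endo \<phi> \<Longrightarrow> endo \<psi> \<Longrightarrow> endo (\<lambda>x. \<phi> x + \<psi> x)"
  unfolding endo_def by (simp add: algebra_simps)

lemma endo_uminus: "endo \<phi> \<Longrightarrow> endo (\<lambda>x. - \<phi> x)"
  unfolding endo_def by simp

lemma endo_comp: "endo \<phi> \<Longrightarrow> endo \<psi> \<Longrightarrow> endo (\<phi> \<circ> \<psi>)"
  unfolding endo_def by simp

lemma subgrp_zero: "subgrp U \<Longrightarrow> 0 \<in> U"
  unfolding subgrp_def by blast

lemma subgrp_add: "subgrp U \<Longrightarrow> x \<in> U \<Longrightarrow> y \<in> U \<Longrightarrow> x + y \<in> U"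
  unfolding subgrp_def by blast

lemma subgrp_minus: "subgrp U \<Longrightarrow> x \<in> U \<Longrightarrow> - x \<in> U"
  unfolding subgrp_def by blast

lemma ring_End_ring: "ring (End_ring TYPE('a::ab_group_add))"
proof (rule ringI)
  show "abelian_group (End_ring TYPE('a))"
  proof (rule abelian_groupI)
    fix \<phi> assume "\<phi> \<in> carrier (End_ring TYPE('a))"
    then have "(\<lambda>x. - \<phi> x) \<in> carrier (End_ring TYPE('a))
        \<and> (\<lambda>x. - \<phi> x) \<oplus>\<^bsub>End_ring TYPE('a)\<^esub> \<phi> = \<zero>\<^bsub>End_ring TYPE('a)\<^esub>"
      by (simp add: End_ring_def endo_uminus)
    then show "\<exists>\<psi>\<in>carrier (End_ring TYPE('a)). \<psi> \<oplus>\<^bsub>End_ring TYPE('a)\<^esub> \<phi> = \<zero>\<^bsub>End_ring TYPE('a)\<^esub>"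
      by blast
  qed (auto simp: End_ring_def endo_add endo_zero_fun add_ac)
next
  show "monoid (End_ring TYPE('a))"
    by (rule monoidI) (auto simp: End_ring_def endo_comp endo_id comp_assoc)
qed (auto simp: End_ring_def endo_def)

lemma End_ring_a_inv:
  assumes "endo \<phi>"
  shows "\<ominus>\<^bsub>End_ring TYPE('a::ab_group_add)\<^esub> \<phi> = (\<lambda>x. - \<phi> x)"
proof -
  interpret ring "End_ring TYPE('a)" by (rule ring_End_ring)
  show ?thesis
    by (rule minus_equality) (simp_all add: End_ring_def assms endo_uminus)
qed

lemma (in ring) ideal_restrict_subring:
  assumes I: "ideal I R" and S: "subring S R" and "I \<subseteq> S"
  shows "ideal I (R\<lparr>carrier := S\<rparr>)"
proof (rule idealI)
  show "ring (R\<lparr>carrier := S\<rparr>)" by (rule subring_is_ring[OF S])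
  have "subgroup I (add_monoid R)"
    using I by (simp add: ideal_def additive_subgroup_def)
  then have "subgroup I ((add_monoid R)\<lparr>carrier := S\<rparr>)"
    using add.subgroup_incl subring.axioms(1)[OF S] \<open>I \<subseteq> S\<close> by blast
  then show "subgroup I (add_monoid (R\<lparr>carrier := S\<rparr>))" by simp
next
  fix a x assume "a \<in> I" "x \<in> carrier (R\<lparr>carrier := S\<rparr>)"
  then have "x \<in> carrier R" using subringE(1)[OF S] by auto
  then show "x \<otimes>\<^bsub>R\<lparr>carrier := S\<rparr>\<^esub> a \<in> I" "a \<otimes>\<^bsub>R\<lparr>carrier := S\<rparr>\<^esub> x \<in> I"
    using ideal.I_l_closed[OF I \<open>a \<in> I\<close>] ideal.I_r_closed[OF I \<open>a \<in> I\<close>] by simp_all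
qed

lemma coset_eq:
  assumes U: "subgrp U" and "y - z \<in> U"
  shows "(\<lambda>x. y + x) ` U = (\<lambda>x. z + x) ` U"
proof -
  have "(\<lambda>x. y + x) ` U \<subseteq> (\<lambda>x. z + x) ` U" if "y - z \<in> U" for y z
  proof
    fix w assume "w \<in> (\<lambda>x. y + x) ` U"
    then obtain u where "u \<in> U" "w = y + u" by blast
    then have "w = z + ((y - z) + u)" "(y - z) + u \<in> U"
      using subgrp_add[OF U that] by auto
    then show "w \<in> (\<lambda>x. z + x) ` U" by blast
  qed
  moreover have "z - y \<in> U" using subgrp_minus[OF U assms(2)] by simp
  ultimately show ?thesis using assms(2) by blast
qed

lemma finite_quot_set_iff:
  assumes U: "subgrp U"
  shows "finite (quot_set Y U) \<longleftrightarrow> (\<exists>F. finite F \<and> (\<forall>y\<in>Y. \<exists>f\<in>F. y - f \<in> U))"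
proof
  assume fin: "finite (quot_set Y U)"
  define rep where "rep C = (SOME c. c \<in> C)" for C :: "'a set"
  have "\<exists>f\<in>rep ` quot_set Y U. y - f \<in> U" if "y \<in> Y" for y
  proof -
    have "y + 0 \<in> (\<lambda>x. y + x) ` U" using subgrp_zero[OF U] by blast
    then have "rep ((\<lambda>x. y + x) ` U) \<in> (\<lambda>x. y + x) ` U"
      unfolding rep_def by (rule someI)
    then obtain v where "v \<in> U" "rep ((\<lambda>x. y + x) ` U) = y + v" by blast
    then have "y - rep ((\<lambda>x. y + x) ` U) \<in> U"
      using subgrp_minus[OF U \<open>v \<in> U\<close>] by simp
    moreover have "(\<lambda>x. y + x) ` U \<in> quot_set Y U"
      using \<open>y \<in> Y\<close> unfolding quot_set_def by blast
    ultimately show ?thesis by blast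
  qed
  moreover have "finite (rep ` quot_set Y U)" using fin by simp
  ultimately show "\<exists>F. finite F \<and> (\<forall>y\<in>Y. \<exists>f\<in>F. y - f \<in> U)" by blast
next
  assume "\<exists>F. finite F \<and> (\<forall>y\<in>Y. \<exists>f\<in>F. y - f \<in> U)"
  then obtain F where F: "finite F" "\<forall>y\<in>Y. \<exists>f\<in>F. y - f \<in> U" by blast
  have "quot_set Y U \<subseteq> (\<lambda>f. (\<lambda>x. f + x) ` U) ` F"
  proof
    fix C assume "C \<in> quot_set Y U"
    then obtain y where "y \<in> Y" "C = (\<lambda>x. y + x) ` U" unfolding quot_set_def by blast
    moreover obtain f where "f \<in> F" "y - f \<in> U" using F(2) \<open>y \<in> Y\<close> by blast
    ultimately show "C \<in> (\<lambda>f. (\<lambda>x. f + x) ` U) ` F" using coset_eq[OF U] by blast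
  qed
  then show "finite (quot_set Y U)"
    using F(1) finite_subset by blast
qed

definition finitely_many_cosets :: "('a::ab_group_add \<Rightarrow> 'a) \<Rightarrow> 'a set \<Rightarrow> bool" where
  "finitely_many_cosets \<phi> U \<longleftrightarrow> (\<exists>F. finite F \<and> (\<forall>u\<in>U. \<exists>f\<in>F. \<phi> u - f \<in> U))"

lemma inertial_iff:
  "inertial \<phi> \<longleftrightarrow> endo \<phi> \<and> (\<forall>U. subgrp U \<longrightarrow> finitely_many_cosets \<phi> U)"
proof -
  have cover_iff: "(\<forall>y\<in>{a + b | a b. a \<in> \<phi> ` U \<and> b \<in> U}. \<exists>f\<in>F. y - f \<in> U)
      \<longleftrightarrow> (\<forall>u\<in>U. \<exists>f\<in>F. \<phi> u - f \<in> U)" if U: "subgrp U" for U F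
  proof
    assume Y: "\<forall>y\<in>{a + b | a b. a \<in> \<phi> ` U \<and> b \<in> U}. \<exists>f\<in>F. y - f \<in> U"
    show "\<forall>u\<in>U. \<exists>f\<in>F. \<phi> u - f \<in> U"
    proof
      fix u assume "u \<in> U"
      then have "\<phi> u + 0 \<in> {a + b | a b. a \<in> \<phi> ` U \<and> b \<in> U}"
        using subgrp_zero[OF U] by blast
      then have "\<exists>f\<in>F. \<phi> u + 0 - f \<in> U" using Y by blast
      then show "\<exists>f\<in>F. \<phi> u - f \<in> U" by simp
    qed
  next
    assume \<Phi>: "\<forall>u\<in>U. \<exists>f\<in>F. \<phi> u - f \<in> U"
    show "\<forall>y\<in>{a + b | a b. a \<in> \<phi> ` U \<and> b \<in> U}. \<exists>f\<in>F. y - f \<in> U"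
    proof
      fix y assume "y \<in> {a + b | a b. a \<in> \<phi> ` U \<and> b \<in> U}"
      then obtain u w where "u \<in> U" "w \<in> U" "y = \<phi> u + w" by blast
      obtain f where "f \<in> F" and f: "\<phi> u - f \<in> U" using \<Phi> \<open>u \<in> U\<close> by blast
      have "y - f = (\<phi> u - f) + w" using \<open>y = \<phi> u + w\<close> by simp
      also have "\<dots> \<in> U" using subgrp_add[OF U f \<open>w \<in> U\<close>] .
      finally have "y - f \<in> U" .
      then show "\<exists>f\<in>F. y - f \<in> U" using \<open>f \<in> F\<close> by blast
    qed
  qed
  have "finite (quot_set {a + b | a b. a \<in> \<phi> ` U \<and> b \<in> U} U) \<longleftrightarrow> finitely_many_cosets \<phi> U"
    if U: "subgrp U" for U
    by (simp only: finite_quot_set_iff[OF U] finitely_many_cosets_def cover_iff[OF U])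
  then show ?thesis
    by (simp add: inertial_def)
qed

lemma finitely_many_cosets_id:
  "subgrp U \<Longrightarrow> finitely_many_cosets id U"
  unfolding finitely_many_cosets_def by (intro exI[of _ "{0}"]) simp

lemma finitely_many_cosets_finite_range:
  "subgrp U \<Longrightarrow> finite (range \<phi>) \<Longrightarrow> finitely_many_cosets \<phi> U"
proof -
  assume "subgrp U" "finite (range \<phi>)"
  moreover have "\<forall>u\<in>U. \<exists>f\<in>range \<phi>. \<phi> u - f \<in> U"
    using subgrp_zero[OF \<open>subgrp U\<close>] by (metis diff_self rangeI)
  ultimately show ?thesis
    unfolding finitely_many_cosets_def by blast
qed

lemma finitely_many_cosets_add:
  assumes U: "subgrp U" and "finitely_many_cosets \<phi> U" and "finitely_many_cosets \<psi> U"
  shows "finitely_many_cosets (\<lambda>x. \<phi> x + \<psi> x) U"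
proof -
  obtain F G where "finite F" "finite G"
    and F: "\<forall>u\<in>U. \<exists>f\<in>F. \<phi> u - f \<in> U" and G: "\<forall>u\<in>U. \<exists>g\<in>G. \<psi> u - g \<in> U"
    using assms(2,3) unfolding finitely_many_cosets_def by blast
  have "\<exists>h\<in>{f + g | f g. f \<in> F \<and> g \<in> G}. \<phi> u + \<psi> u - h \<in> U" if "u \<in> U" for u
  proof -
    obtain f g where "f \<in> F" "g \<in> G" and fg: "\<phi> u - f \<in> U" "\<psi> u - g \<in> U"
      using F G \<open>u \<in> U\<close> by blast
    have "\<phi> u + \<psi> u - (f + g) = (\<phi> u - f) + (\<psi> u - g)" by simp
    also have "\<dots> \<in> U" using subgrp_add[OF U fg] .
    finally show ?thesis using \<open>f \<in> F\<close> \<open>g \<in> G\<close> by blast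
  qed
  moreover have "finite {f + g | f g. f \<in> F \<and> g \<in> G}"
    using finite_image_set2[of "\<lambda>f. f \<in> F" "\<lambda>g. g \<in> G"] \<open>finite F\<close> \<open>finite G\<close> by simp
  ultimately show ?thesis
    unfolding finitely_many_cosets_def by blast
qed

lemma finitely_many_cosets_uminus:
  assumes U: "subgrp U" and "finitely_many_cosets \<phi> U"
  shows "finitely_many_cosets (\<lambda>x. - \<phi> x) U"
proof -
  obtain F where "finite F" and F: "\<forall>u\<in>U. \<exists>f\<in>F. \<phi> u - f \<in> U"
    using assms(2) unfolding finitely_many_cosets_def by blast
  have "\<exists>h\<in>uminus ` F. - \<phi> u - h \<in> U" if "u \<in> U" for u
  proof -
    obtain f where "f \<in> F" and f: "\<phi> u - f \<in> U" using F \<open>u \<in> U\<close> by blast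
    have "- \<phi> u - (- f) = - (\<phi> u - f)" by simp
    also have "\<dots> \<in> U" using subgrp_minus[OF U f] .
    finally show ?thesis using \<open>f \<in> F\<close> by blast
  qed
  moreover have "finite (uminus ` F)" using \<open>finite F\<close> by simp
  ultimately show ?thesis
    unfolding finitely_many_cosets_def by blast
qed

lemma finitely_many_cosets_comp:
  assumes U: "subgrp U" and "endo \<phi>"
    and "finitely_many_cosets \<phi> U" and "finitely_many_cosets \<psi> U"
  shows "finitely_many_cosets (\<phi> \<circ> \<psi>) U"
proof -
  obtain F G where "finite F" "finite G"
    and F: "\<forall>u\<in>U. \<exists>f\<in>F. \<phi> u - f \<in> U" and G: "\<forall>u\<in>U. \<exists>g\<in>G. \<psi> u - g \<in> U"
    using assms(3,4) unfolding finitely_many_cosets_def by blast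
  have "\<exists>h\<in>{\<phi> g + f | g f. g \<in> G \<and> f \<in> F}. (\<phi> \<circ> \<psi>) u - h \<in> U" if "u \<in> U" for u
  proof -
    obtain g where "g \<in> G" "\<psi> u - g \<in> U" using G \<open>u \<in> U\<close> by blast
    then obtain f where "f \<in> F" and f: "\<phi> (\<psi> u - g) - f \<in> U" using F by blast
    have "(\<phi> \<circ> \<psi>) u - (\<phi> g + f) = \<phi> (\<psi> u - g) - f"
      by (simp add: endo_diff[OF \<open>endo \<phi>\<close>])
    also have "\<dots> \<in> U" by (rule f)
    finally show ?thesis using \<open>f \<in> F\<close> \<open>g \<in> G\<close> by blast
  qed
  moreover have "finite {\<phi> g + f | g f. g \<in> G \<and> f \<in> F}"
    using finite_image_set2[of "\<lambda>g. g \<in> G" "\<lambda>f. f \<in> F"] \<open>finite F\<close> \<open>finite G\<close> by simp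
  ultimately show ?thesis
    unfolding finitely_many_cosets_def by blast
qed

lemma inertial_imp_endo: "inertial \<phi> \<Longrightarrow> endo \<phi>"
  by (simp add: inertial_def)

lemma inertial_id: "inertial id"
  by (simp add: inertial_iff endo_id finitely_many_cosets_id)

lemma inertial_add: "inertial \<phi> \<Longrightarrow> inertial \<psi> \<Longrightarrow> inertial (\<lambda>x. \<phi> x + \<psi> x)"
  by (simp add: inertial_iff endo_add finitely_many_cosets_add)

lemma inertial_uminus: "inertial \<phi> \<Longrightarrow> inertial (\<lambda>x. - \<phi> x)"
  by (simp add: inertial_iff endo_uminus finitely_many_cosets_uminus)

lemma inertial_comp: "inertial \<phi> \<Longrightarrow> inertial \<psi> \<Longrightarrow> inertial (\<phi> \<circ> \<psi>)"
  by (simp add: inertial_iff endo_comp finitely_many_cosets_comp)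

lemma inertial_if_finite_range: "endo \<phi> \<Longrightarrow> finite (range \<phi>) \<Longrightarrow> inertial \<phi>"
  by (simp add: inertial_iff finitely_many_cosets_finite_range)

lemma subring_IE: "subring (IE TYPE('a::ab_group_add)) (End_ring TYPE('a))"
proof -
  interpret ring "End_ring TYPE('a)" by (rule ring_End_ring)
  show ?thesis
  proof (rule subringI)
    fix \<phi> assume "\<phi> \<in> IE TYPE('a)"
    then show "\<ominus>\<^bsub>End_ring TYPE('a)\<^esub> \<phi> \<in> IE TYPE('a)"
      by (simp add: IE_def End_ring_a_inv inertial_imp_endo inertial_uminus)
  qed (auto simp: IE_def End_ring_def inertial_id inertial_add inertial_comp dest: inertial_imp_endo)
qed

lemma FE_subset_IE: "FE TYPE('a::ab_group_add) \<subseteq> IE TYPE('a)"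
  by (auto simp: FE_def IE_def inertial_if_finite_range)

lemma ideal_FE_End_ring: "ideal (FE TYPE('a::ab_group_add)) (End_ring TYPE('a))"
proof -
  interpret ring "End_ring TYPE('a)" by (rule ring_End_ring)
  show ?thesis
  proof (rule idealI)
    show "subgroup (FE TYPE('a)) (add_monoid (End_ring TYPE('a)))"
    proof (rule add.subgroupI)
      show "FE TYPE('a) \<subseteq> carrier (End_ring TYPE('a))"
        by (auto simp: FE_def End_ring_def)
      show "FE TYPE('a) \<noteq> {}"
        using endo_zero_fun by (force simp: FE_def)
    next
      fix \<phi> assume "\<phi> \<in> FE TYPE('a)"
      moreover have "range (\<lambda>x. - \<phi> x) = uminus ` range \<phi>" by auto
      ultimately show "\<ominus>\<^bsub>End_ring TYPE('a)\<^esub> \<phi> \<in> FE TYPE('a)"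
        by (simp add: FE_def End_ring_a_inv endo_uminus)
    next
      fix \<phi> \<psi> assume "\<phi> \<in> FE TYPE('a)" "\<psi> \<in> FE TYPE('a)"
      moreover have "range (\<lambda>x. \<phi> x + \<psi> x) \<subseteq> {p + q | p q. p \<in> range \<phi> \<and> q \<in> range \<psi>}"
        by blast
      moreover note finite_image_set2[of "\<lambda>p. p \<in> range \<phi>" "\<lambda>q. q \<in> range \<psi>" "(+)"]
      ultimately show "\<phi> \<oplus>\<^bsub>End_ring TYPE('a)\<^esub> \<psi> \<in> FE TYPE('a)"
        by (auto simp: FE_def End_ring_def endo_add intro: finite_subset)
    qed
  next
    fix \<phi> \<psi> assume "\<phi> \<in> FE TYPE('a)" "\<psi> \<in> carrier (End_ring TYPE('a))"
    moreover have "range (\<psi> \<circ> \<phi>) = \<psi> ` range \<phi>" "range (\<phi> \<circ> \<psi>) \<subseteq> range \<phi>"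
      by (auto simp: image_comp)
    ultimately show "\<psi> \<otimes>\<^bsub>End_ring TYPE('a)\<^esub> \<phi> \<in> FE TYPE('a)"
        and "\<phi> \<otimes>\<^bsub>End_ring TYPE('a)\<^esub> \<psi> \<in> FE TYPE('a)"
      by (auto simp: FE_def End_ring_def endo_comp intro: finite_subset)
  qed (rule ring_End_ring)
qed

theorem mainTheorem1:
  shows "subring (IE TYPE('a::ab_group_add)) (End_ring TYPE('a))
       \<and> FE TYPE('a) \<subseteq> IE TYPE('a)
       \<and> ideal (FE TYPE('a)) ((End_ring TYPE('a))\<lparr>carrier := IE TYPE('a)\<rparr>)"
  using subring_IE FE_subset_IE
    ring.ideal_restrict_subring[OF ring_End_ring ideal_FE_End_ring subring_IE FE_subset_IE]
  by blast

end
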